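(* Let $Q$ be a point of $\mathfrak X(m)_{\rm rig}$ and $1\le i\le m-1$. If $w_{\rm rig}(\phi_{i,\rm rig}(Q))$ is canonical, then $\phi_{i+1,\rm rig}(Q)$ is anti-canonical.
   Context: $p$ prime; $L_0/\mathbb Q_p$ finite, ring of integers $\mathcal O_0$, uniformizer $\varpi$, residue field $\kappa\cong\mathbb F_q$; $\mathrm{val}(\varpi)=1$. $X,Y$ curves over $\mathcal O_0$ (reduced, flat separated finite type, connected one-dimensional geometric fibres), $\pi:Y\to X$ with: $X$ smooth; $Y$ regular; $\pi\otimes\kappa$ has a section $s$; $Y\otimes\kappa$ reduced with two components meeting at $\kappa$-rational points with completed local ring $\cong\kappa[[u,v]]/(uv)$, each singular point the only point over its image; $w$ (resp. $\delta$) an $\mathcal O_0$-automorphism of $Y$ whose reduction interchanges (resp. preserves) the components; $\pi$ finite flat of degree $1+e$, $e>1$. $\mathfrak X_{\rm rig},\mathfrak Y_{\rm rig}$ generic fibres of formal completions along special fibres. Measures of singularity (Goren–Kassaei): $\nu_{\mathfrak Y}$ on $\mathfrak Y_{\rm rig}$ with values in $\mathbb Q\cap[0,1]$ ($0$/$1$ on points specializing to nonsingular points of $s(X\otimes\kappa)$/the other component, normalized annulus-parameter valuation on residue annuli of singular points), $\nu_{\mathfrak X}$ on $\mathfrak X_{\rm rig}$. A point $Q$ is canonical if $\nu_{\mathfrak Y}(Q)<e/(e+1)$ and anti-canonical if $\nu_{\mathfrak Y}(Q)>e/(e+1)$. Known: canonical points are exactly the image of a section $\mathfrak s_{\rm rig}$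 of $\pi_{\rm rig}$ over $\mathfrak X_{\rm rig}[0,e/(e+1))$ and satisfy $\nu_{\mathfrak Y}(Q)=\nu_{\mathfrak X}(\pi_{\rm rig}Q)$; anti-canonical $Q$ satisfy $\nu_{\mathfrak Y}(Q)=1-e^{-1}\nu_{\mathfrak X}(\pi_{\rm rig}Q)$; $\nu_{\mathfrak Y}(Q)=e/(e+1)$ iff $\nu_{\mathfrak X}(\pi_{\rm rig}Q)\ge e/(e+1)$; $\nu_{\mathfrak Y}(w_{\rm rig}Q)=1-\nu_{\mathfrak Y}(Q)$; $\nu_{\mathfrak Y}(\delta_{\rm rig}Q)=\nu_{\mathfrak Y}(Q)$. $\mathfrak Y^0_{\rm rig}$ is a rigid curve over $L_0$ with finite flat $\pi_{1,\rm rig},\pi'_{1,\rm rig}:\mathfrak Y^0_{\rm rig}\to\mathfrak Y_{\rm rig}$, $\pi_{\rm rig}\pi_{1,\rm rig}=\pi_{\rm rig}\pi'_{1,\rm rig}$, $\pi_{1,\rm rig}(Q)\neq\pi'_{1,\rm rig}(Q)$ for all $Q$ (so if one is canonical the other is anti-canonical); $\pi_{2,\rm rig}=w_{\rm rig}\pi'_{1,\rm rig}$. Higher level: $m\ge1$; $X(m)$ a curve over $\mathcal O_0$ with generic fibre of formal completion $\mathfrak X(m)_{\rm rig}$; $\mathfrak X^0(m)_{\rm rig}$ a rigid curve over $L_0$ with finite flat $\lambda_{1,\rm rig},\lambda_{2,\rm rig}:\mathfrak X^0(m)_{\rm rig}\to\mathfrak X(m)_{\rm rig}$; for $1\le i\le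 m$ morphisms $\phi_i:X(m)\to Y$ and $\eta_{i,\rm rig}:\mathfrak X^0(m)_{\rm rig}\to\mathfrak Y^0_{\rm rig}$ with $\phi_{i,\rm rig}\lambda_{j,\rm rig}=\pi_{j,\rm rig}\eta_{i,\rm rig}$ ($j=1,2$) and $\phi_{i,\rm rig}\lambda_{1,\rm rig}=\delta_{\rm rig}\pi_{2,\rm rig}\eta_{i+1,\rm rig}$ for $1\le i\le m-1$. *)

theory Defs
  imports Complex_Main
begin

text \<open>Rigid analytic spaces are modelled by their sets of points (types);
  morphisms by functions on points.  The measure of singularity on Y_rig is
  a function nuY into the rationals in [0,1].\<close>

definition canonical :: "nat \<Rightarrow> ('y \<Rightarrow> real) \<Rightarrow> 'y \<Rightarrow> bool" where
  "canonical e nuY Q \<longleftrightarrow> nuY Q < real e / (real e + 1)"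

definition anti_canonical :: "nat \<Rightarrow> ('y \<Rightarrow> real) \<Rightarrow> 'y \<Rightarrow> bool" where
  "anti_canonical e nuY Q \<longleftrightarrow> nuY Q > real e / (real e + 1)"

end

theory Submission
  imports Defs
begin

text \<open>Unwinding the compatibilities, pick R with Q = lam1 R and put E = eta (i+1) R:
  then phi (i+1) Q = pi1 E, while phi i Q = delta (w (pi1' E)), so the hypothesis says
  exactly that pi1' E is canonical.  Canonical points form the image of a section of pi,
  so pi1 E, which lies over the same point as pi1' E but differs from it, is not canonical;
  and since pi (pi1 E) has measure below e/(e+1), pi1 E is not on the boundary either.\<close>

lemma anti_canonical_iff:
  "anti_canonical e nu P \<longleftrightarrow> \<not> canonical e nu P \<and> nu P \<noteq> real e / (real e + 1)"
  unfolding canonical_def anti_canonical_def by auto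

lemma canonical_cong:
  "nu P = nu P' \<Longrightarrow> canonical e nu P \<longleftrightarrow> canonical e nu P'"
  unfolding canonical_def by simp

lemma anti_canonical_of_canonical_partner:
  fixes nuY :: "'y \<Rightarrow> real" and nuX :: "'x \<Rightarrow> real" and p :: "'y \<Rightarrow> 'x"
  assumes sec_s: "\<And>x. nuX x < real e / (real e + 1) \<Longrightarrow> p (s x) = x"
    and canonical_image: "\<And>P. canonical e nuY P \<longleftrightarrow>
          (\<exists>x. nuX x < real e / (real e + 1) \<and> P = s x)"
    and boundary_nu: "\<And>P. nuY P = real e / (real e + 1) \<longleftrightarrow>
          nuX (p P) \<ge> real e / (real e + 1)"
    and same_image: "p P = p P'" and distinct: "P \<noteq> P'"
    and canonical_partner: "canonical e nuY P'"
  shows "anti_canonical e nuY P"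
proof -
  obtain x where x: "nuX x < real e / (real e + 1)" "P' = s x"
    using canonical_partner canonical_image by blast
  have p_P: "p P = x"
    using same_image x sec_s by simp
  have "\<not> canonical e nuY P"
  proof
    assume "canonical e nuY P"
    then obtain y where "nuX y < real e / (real e + 1)" "P = s y"
      using canonical_image by blast
    with p_P sec_s have "P = s x" by simp
    with x distinct show False by simp
  qed
  moreover have "nuY P \<noteq> real e / (real e + 1)"
    using boundary_nu p_P x by simp
  ultimately show ?thesis
    by (simp add: anti_canonical_iff)
qed

theorem lemma2p22:
  fixes e m :: nat
    and nuY :: "'y \<Rightarrow> real" and nuX :: "'x \<Rightarrow> real"
    and pi :: "'y \<Rightarrow> 'x" and w delta :: "'y \<Rightarrow> 'y"
    and s :: "'x \<Rightarrow> 'y"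
    and pi1 pi1' pi2 :: "'y0 \<Rightarrow> 'y"
    and lam1 lam2 :: "'xm0 \<Rightarrow> 'xm"
    and phi :: "nat \<Rightarrow> 'xm \<Rightarrow> 'y"
    and eta :: "nat \<Rightarrow> 'xm0 \<Rightarrow> 'y0"
    and Q :: 'xm and i :: nat
  assumes e_gt: "e > 1"
    and m_ge: "m \<ge> 1"
    and nuY_rat: "\<And>P. nuY P \<in> \<rat> \<and> 0 \<le> nuY P \<and> nuY P \<le> 1"
    and nuX_range: "\<And>x. nuX x \<in> \<rat> \<and> 0 \<le> nuX x \<and> nuX x \<le> 1"
    and sec_s: "\<And>x. nuX x < real e / (real e + 1) \<Longrightarrow> pi (s x) = x"
    and canonical_image: "\<And>P. canonical e nuY P \<longleftrightarrow>
          (\<exists>x. nuX x < real e / (real e + 1) \<and> P = s x)"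
    and canonical_nu: "\<And>P. canonical e nuY P \<Longrightarrow> nuY P = nuX (pi P)"
    and anti_canonical_nu: "\<And>P. anti_canonical e nuY P \<Longrightarrow>
          nuY P = 1 - nuX (pi P) / real e"
    and boundary_nu: "\<And>P. nuY P = real e / (real e + 1) \<longleftrightarrow>
          nuX (pi P) \<ge> real e / (real e + 1)"
    and w_nu: "\<And>P. nuY (w P) = 1 - nuY P"
    and delta_nu: "\<And>P. nuY (delta P) = nuY P"
    and pi1_pi1': "\<And>R. pi (pi1 R) = pi (pi1' R)"
    and pi1_ne: "\<And>R. pi1 R \<noteq> pi1' R"
    and pi2_def: "\<And>R. pi2 R = w (pi1' R)"
    and lam1_surj: "surj lam1" and lam2_surj: "surj lam2"
    and compat1: "\<And>k R. 1 \<le> k \<Longrightarrow> k \<le> m \<Longrightarrow> phi k (lam1 R) = pi1 (eta k R)"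
    and compat2: "\<And>k R. 1 \<le> k \<Longrightarrow> k \<le> m \<Longrightarrow> phi k (lam2 R) = pi2 (eta k R)"
    and compat3: "\<And>k R. 1 \<le> k \<Longrightarrow> k \<le> m - 1 \<Longrightarrow>
          phi k (lam1 R) = delta (pi2 (eta (k + 1) R))"
    and i_range: "1 \<le> i" "i \<le> m - 1"
    and hyp: "canonical e nuY (w (phi i Q))"
  shows "anti_canonical e nuY (phi (i + 1) Q)"
proof -
  obtain R where Q: "Q = lam1 R"
    using lam1_surj by (metis surjD)
  define E where "E = eta (i + 1) R"
  have phi_i: "phi i Q = delta (w (pi1' E))"
    using compat3[OF i_range] Q pi2_def E_def by simp
  have phi_Suc_i: "phi (i + 1) Q = pi1 E"
    using compat1[of "i + 1"] i_range Q E_def by simp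
  have "canonical e nuY (pi1' E)"
    using hyp canonical_cong[of nuY "w (phi i Q)" "pi1' E"] phi_i w_nu delta_nu by simp
  then show ?thesis
    unfolding phi_Suc_i
    using anti_canonical_of_canonical_partner[OF sec_s canonical_image boundary_nu]
      pi1_pi1' pi1_ne by blast
qed

end
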